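(* Let $A\in\mathbb{R}^{n\times n}$ be symmetric positive-semidefinite, $b\in\mathbb{R}^n$, $\alpha\in\mathbb{R}$, $g:\mathbb{R}^n\to(-\infty,\infty]$ proper, lower semicontinuous and convex, and $\gamma>0$ such that $I-\gamma A$ is positive-definite. Set $Q:=(I-\gamma A)^{-1}$, $c:=\gamma Qb$, $P:=Q-I$, $\psi(u):=\frac12\langle Pu,u\rangle+\langle c,u\rangle+\gamma e_\gamma g(u)$ and $\varphi(x):=\frac12\langle Ax,x\rangle+\langle b,x\rangle+\alpha+g(x)$. Then the following are equivalent for $\bar x\in\mathbb{R}^n$: (i) $\bar x$ is an optimal solution of minimizing $\varphi$ over $\mathbb{R}^n$; (ii) $\bar x=Q\bar u+c$ for some optimal solution $\bar u$ of minimizing $\psi$ over $\mathbb{R}^n$.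
   Context: Moreau envelope: $e_\gamma g(x):=\inf_y\{g(y)+\frac1{2\gamma}\|y-x\|^2\}$. *)

theory Defs
  imports "HOL-Analysis.Analysis"
begin

definition proper_fun :: "('a \<Rightarrow> ereal) \<Rightarrow> bool" where
  "proper_fun g \<longleftrightarrow> (\<forall>x. g x \<noteq> -\<infinity>) \<and> (\<exists>x. g x \<noteq> \<infinity>)"

definition lsc_fun :: "('a::topological_space \<Rightarrow> ereal) \<Rightarrow> bool" where
  "lsc_fun g \<longleftrightarrow> (\<forall>x. g x \<le> Liminf (at x) g)"

definition ereal_convex_fun :: "('a::real_vector \<Rightarrow> ereal) \<Rightarrow> bool" where
  "ereal_convex_fun g \<longleftrightarrow> convex {(x, t::real). g x \<le> ereal t}"

definition moreau_env :: "real \<Rightarrow> ('a::real_normed_vector \<Rightarrow> ereal) \<Rightarrow> 'a \<Rightarrow> ereal" where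
  "moreau_env \<gamma> g x = (INF y. g y + ereal (norm (y - x) ^ 2 / (2 * \<gamma>)))"

definition pos_semidef :: "real^'n^'n \<Rightarrow> bool" where
  "pos_semidef M \<longleftrightarrow> (\<forall>x. 0 \<le> x \<bullet> (M *v x))"

definition pos_def :: "real^'n^'n \<Rightarrow> bool" where
  "pos_def M \<longleftrightarrow> (\<forall>x. x \<noteq> 0 \<longrightarrow> 0 < x \<bullet> (M *v x))"

end

theory Submission
  imports Defs
begin

(* Let M = I - \<gamma>A, so Q = M\<inverse>, and T u = Q u + c. Completing the square shows
   \<psi> u = inf_y (\<gamma> \<phi> y + K + R u y) with a constant K and the coupling term
   R u y = <T u - y, M (T u - y)>/2, which vanishes at y = T u and grows quadratically
   in |T u - y| because M is positive definite. As T is onto, a minimizer x of \<phi> gives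
   the minimizer u = T\<inverse> x of \<psi>. Conversely, if u minimizes \<psi> but some y beats T u
   for \<phi>, then lower semicontinuity of \<phi> near T u and the growth of R away from it
   push the infimum defining \<psi> u above its own value. This needs \<psi> u > -\<infinity>, which
   holds because a proper lsc convex g has a cone minorant, so its Moreau envelope
   is finite. *)

lemma ereal_affine_INF:
  fixes f :: "'a \<Rightarrow> ereal"
  assumes "0 < \<gamma>"
  shows "ereal a + ereal \<gamma> * (INF y. f y) = (INF y. ereal a + ereal \<gamma> * f y)"
proof -
  have "continuous_on UNIV (\<lambda>x::ereal. ereal a + ereal \<gamma> * x)"
    unfolding continuous_on_def
    by (intro ballI tendsto_add_ereal_general tendsto_cmult_ereal tendsto_ident_at tendsto_const) auto
  then show ?thesis
    by (subst continuous_at_Inf_mono[where f="\<lambda>x. ereal a + ereal \<gamma> * x"])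
       (auto simp: mono_def add_mono ereal_mult_left_mono image_comp assms less_imp_le
         continuous_on_eq_continuous_at continuous_at_imp_continuous_at_within)
qed

lemma lsc_fun_less_on_ball:
  fixes g :: "'a::metric_space \<Rightarrow> ereal"
  assumes "lsc_fun g" and "t < g x"
  shows "\<exists>\<delta>>0. \<forall>y. dist y x < \<delta> \<longrightarrow> t < g y"
proof -
  have "\<forall>\<^sub>F y in at x. t < g y"
    using assms unfolding lsc_fun_def le_Liminf_iff by blast
  then obtain \<delta> where "\<delta> > 0" "\<And>y. y \<noteq> x \<Longrightarrow> dist y x < \<delta> \<Longrightarrow> t < g y"
    unfolding eventually_at by auto
  with assms(2) show ?thesis by metis
qed

lemma lsc_fun_add_continuous:
  fixes g :: "'a::topological_space \<Rightarrow> ereal"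
  assumes lsc: "lsc_fun g" and h: "continuous_on UNIV h"
  shows "lsc_fun (\<lambda>x. ereal (h x) + g x)"
  unfolding lsc_fun_def le_Liminf_iff
proof (intro allI impI)
  fix x and y :: ereal
  assume "y < ereal (h x) + g x"
  then obtain t where t: "y < ereal t" "ereal t < ereal (h x) + g x"
    using ereal_dense2 by blast
  then have "ereal (t - h x) < g x" by (cases "g x") auto
  then obtain s where s: "ereal (t - h x) < ereal s" "ereal s < g x"
    using ereal_dense2 by blast
  have "\<forall>\<^sub>F z in at x. ereal s < g z"
    using lsc s(2) unfolding lsc_fun_def le_Liminf_iff by blast
  moreover have "\<forall>\<^sub>F z in at x. t - s < h z"
    using h s(1) by (intro order_tendstoD(1)) (auto simp: continuous_on_def)
  ultimately show "\<forall>\<^sub>F z in at x. y < ereal (h z) + g z"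
  proof eventually_elim
    case (elim z)
    then show ?case using t(1) by (cases "g z") (auto intro: order.strict_trans)
  qed
qed

lemma lsc_fun_cmult:
  fixes g :: "'a::topological_space \<Rightarrow> ereal"
  assumes "lsc_fun g" and "0 \<le> c"
  shows "lsc_fun (\<lambda>x. ereal c * g x)"
  unfolding lsc_fun_def
proof
  fix x
  show "ereal c * g x \<le> Liminf (at x) (\<lambda>y. ereal c * g y)"
  proof (cases "at x = bot")
    case False
    then show ?thesis
      using assms by (simp add: Liminf_ereal_mult_left lsc_fun_def ereal_mult_left_mono)
  qed simp
qed

lemma ereal_convex_funD:
  assumes "ereal_convex_fun g" "g x \<le> ereal a" "g y \<le> ereal b" "0 \<le> t" "t \<le> 1"
  shows "g ((1 - t) *\<^sub>R x + t *\<^sub>R y) \<le> ereal ((1 - t) * a + t * b)"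
  using convexD[OF assms(1)[unfolded ereal_convex_fun_def], of "(x, a)" "(y, b)" "1 - t" t] assms
  by auto

lemma proper_lsc_convex_cone_minorant:
  fixes g :: "'a::real_normed_vector \<Rightarrow> ereal"
  assumes proper: "proper_fun g" and lsc: "lsc_fun g" and convex: "ereal_convex_fun g"
  shows "\<exists>x0 a \<beta>. 0 \<le> \<beta> \<and> (\<forall>y. ereal (a - \<beta> * norm (y - x0)) \<le> g y)"
proof -
  obtain x0 a where a: "g x0 = ereal a"
    using proper unfolding proper_fun_def by (metis ereal_cases)
  obtain \<delta> where "\<delta> > 0" and near: "\<And>y. dist y x0 < \<delta> \<Longrightarrow> ereal (a - 1) < g y"
    using lsc_fun_less_on_ball[OF lsc, of "a - 1" x0] a by auto
  have "ereal (a - 1 - 2 / \<delta> * norm (y - x0)) \<le> g y" for y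
  proof (cases "norm (y - x0) < \<delta>")
    case True
    then have "ereal (a - 1) < g y" using near by (simp add: dist_norm)
    moreover have "a - 1 - 2 / \<delta> * norm (y - x0) \<le> a - 1" using \<open>\<delta> > 0\<close> by simp
    ultimately show ?thesis by (meson ereal_less_eq(3) order.trans less_imp_le)
  next
    case False
    \<comment> \<open>the point of the segment from x0 to y at distance \<open>\<delta>/2\<close> from x0 lies in the ball\<close>
    show ?thesis
    proof (cases "g y")
      case (real b)
      define n where "n = norm (y - x0)"
      define t where "t = \<delta> / (2 * n)"
      have "\<delta> \<le> n" using False by (simp add: n_def)
      then have "0 < t" "t \<le> 1" using \<open>\<delta> > 0\<close> by (auto simp: t_def field_simps)
      have "dist ((1 - t) *\<^sub>R x0 + t *\<^sub>R y) x0 = t * n"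
        using \<open>0 < t\<close> by (simp add: dist_norm n_def algebra_simps flip: scaleR_diff_right)
      also have "\<dots> < \<delta>" using \<open>\<delta> \<le> n\<close> \<open>\<delta> > 0\<close> by (simp add: t_def)
      finally have "ereal (a - 1) < g ((1 - t) *\<^sub>R x0 + t *\<^sub>R y)" by (rule near)
      also have "\<dots> \<le> ereal ((1 - t) * a + t * b)"
        using ereal_convex_funD[OF convex, of x0 a y b t] a real \<open>0 < t\<close> \<open>t \<le> 1\<close> by simp
      finally have "a - 1 / t < b"
        using \<open>0 < t\<close> by (simp add: field_simps)
      moreover have "1 / t = 2 / \<delta> * n" using \<open>\<delta> \<le> n\<close> \<open>\<delta> > 0\<close> by (simp add: t_def)
      ultimately show ?thesis using real by (simp add: n_def)
    qed (use proper in \<open>auto simp: proper_fun_def\<close>)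
  qed
  moreover have "0 \<le> 2 / \<delta>" using \<open>\<delta> > 0\<close> by simp
  ultimately show ?thesis by blast
qed

lemma moreau_env_neq_MInf:
  fixes g :: "'a::real_normed_vector \<Rightarrow> ereal"
  assumes "proper_fun g" "lsc_fun g" "ereal_convex_fun g" and "0 < \<gamma>"
  shows "moreau_env \<gamma> g u \<noteq> -\<infinity>"
proof -
  obtain x0 a \<beta> where "0 \<le> \<beta>" and minorant: "\<And>y. ereal (a - \<beta> * norm (y - x0)) \<le> g y"
    using proper_lsc_convex_cone_minorant[OF assms(1-3)] by blast
  define L where "L = a - \<beta> * norm (u - x0) - \<gamma> * \<beta>\<^sup>2 / 2"
  have "ereal L \<le> g y + ereal (norm (y - u) ^ 2 / (2 * \<gamma>))" for y
  proof -
    define s where "s = norm (y - u)"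
    have "norm (y - x0) \<le> s + norm (u - x0)"
      unfolding s_def by (metis norm_triangle_ineq diff_add_cancel add_diff_eq)
    then have "\<beta> * norm (y - x0) \<le> \<beta> * s + \<beta> * norm (u - x0)"
      using \<open>0 \<le> \<beta>\<close> by (metis distrib_left mult_left_mono)
    moreover have "\<beta> * s \<le> s\<^sup>2 / (2 * \<gamma>) + \<gamma> * \<beta>\<^sup>2 / 2"
    proof -
      have "0 \<le> (s - \<gamma> * \<beta>)\<^sup>2 / (2 * \<gamma>)" using \<open>0 < \<gamma>\<close> by simp
      also have "\<dots> = s\<^sup>2 / (2 * \<gamma>) + \<gamma> * \<beta>\<^sup>2 / 2 - \<beta> * s"
        using \<open>0 < \<gamma>\<close> by (simp add: field_simps power2_eq_square)
      finally show ?thesis by simp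
    qed
    ultimately have "ereal L \<le> ereal (a - \<beta> * norm (y - x0)) + ereal (s\<^sup>2 / (2 * \<gamma>))"
      unfolding L_def by simp
    also have "\<dots> \<le> g y + ereal (s\<^sup>2 / (2 * \<gamma>))" using minorant by (rule add_right_mono)
    finally show ?thesis by (simp add: s_def)
  qed
  then have "ereal L \<le> moreau_env \<gamma> g u" unfolding moreau_env_def by (rule INF_greatest)
  then show ?thesis by auto
qed

lemma pos_def_quadratic_form_ge:
  fixes M :: "real^'n^'n"
  assumes "pos_def M"
  shows "\<exists>\<mu>>0. \<forall>d. \<mu> * (norm d)\<^sup>2 \<le> d \<bullet> (M *v d)"
proof -
  let ?S = "sphere (0::real^'n) 1"
  let ?q = "\<lambda>d::real^'n. d \<bullet> (M *v d)"
  have "axis undefined 1 \<in> ?S" by simp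
  then have "?S \<noteq> {}" by blast
  moreover have "continuous_on ?S ?q"
    by (intro continuous_intros linear_continuous_on matrix_vector_mul_bounded_linear)
  ultimately obtain e where e: "e \<in> ?S" and e_min: "\<And>d. d \<in> ?S \<Longrightarrow> ?q e \<le> ?q d"
    using continuous_attains_inf[OF compact_sphere] by blast
  have "e \<noteq> 0" using e by auto
  then have "0 < ?q e" using assms unfolding pos_def_def by blast
  moreover have "?q e * (norm d)\<^sup>2 \<le> ?q d" for d
  proof (cases "d = 0")
    case False
    have "d /\<^sub>R norm d \<in> ?S" using False by simp
    then have "?q e \<le> ?q (d /\<^sub>R norm d)" by (rule e_min)
    also have "\<dots> = ?q d / (norm d)\<^sup>2"
      by (simp add: matrix_vector_mult_scaleR power2_eq_square divide_inverse)
    finally show ?thesis using False by (simp add: le_divide_eq)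
  qed simp
  ultimately show ?thesis by blast
qed

lemma pos_def_invertible:
  fixes M :: "real^'n^'n"
  assumes "pos_def M"
  shows "invertible M"
proof -
  have "x = 0" if "M *v x = 0" for x
    using assms that unfolding pos_def_def by force
  then show ?thesis
    using matrix_left_invertible_ker invertible_left_inverse by blast
qed

lemma
  fixes M :: "'a::semiring_1^'n^'n"
  assumes "invertible M"
  shows matrix_mul_inv_right: "M ** matrix_inv M = mat 1"
    and matrix_mul_inv_left: "matrix_inv M ** M = mat 1"
  using someI_ex[OF assms[unfolded invertible_def]] unfolding matrix_inv_def by auto

lemma self_adjoint_complete_square:
  fixes f :: "'a::real_inner \<Rightarrow> 'a"
  assumes "linear f" and adj: "\<And>x z. f x \<bullet> z = x \<bullet> f z"
  shows "(s - f s) \<bullet> f s / 2 + c \<bullet> f s + (norm (y - f s))\<^sup>2 / 2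
       = (norm y)\<^sup>2 / 2 - y \<bullet> f y / 2 + f c \<bullet> y - c \<bullet> f c / 2
         + (s + c - y) \<bullet> f (s + c - y) / 2"
  using adj[of s c] adj[of s y] adj[of c y]
  by (simp add: linear_add[OF assms(1)] linear_diff[OF assms(1)] inner_simps
      power2_norm_eq_inner inner_commute algebra_simps) (simp add: field_simps)

lemma quadratic_plus_moreau_env_eq_INF:
  fixes A Q M :: "real^'n^'n" and b c u :: "real^'n" and g :: "real^'n \<Rightarrow> ereal"
  assumes "transpose A = A" and "0 < \<gamma>" and "\<And>y. g y \<noteq> -\<infinity>"
    and M_def: "M = mat 1 - \<gamma> *\<^sub>R A" and MQ: "M ** Q = mat 1" and c_def: "c = \<gamma> *\<^sub>R (Q *v b)"
  shows "ereal (1/2 * (((Q - mat 1) *v u) \<bullet> u) + c \<bullet> u) + ereal \<gamma> * moreau_env \<gamma> g u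
    = (INF y. ereal (- (c \<bullet> (M *v c)) / 2 - \<gamma> * \<alpha>)
              + ereal \<gamma> * (ereal (1/2 * ((A *v y) \<bullet> y) + b \<bullet> y + \<alpha>) + g y)
              + ereal ((Q *v u + c - y) \<bullet> (M *v (Q *v u + c - y)) / 2))"
proof -
  have M_apply: "M *v x = x - \<gamma> *\<^sub>R (A *v x)" for x
    by (simp add: M_def matrix_vector_mult_diff_rdistrib scaleR_matrix_vector_assoc)
  have "(A *v x) \<bullet> z = x \<bullet> (A *v z)" for x z
    by (metis \<open>transpose A = A\<close> dot_lmul_matrix vector_transpose_matrix)
  then have M_adj: "(M *v x) \<bullet> z = x \<bullet> (M *v z)" for x z
    by (simp add: M_apply inner_simps)
  have MQ_apply: "M *v (Q *v x) = x" for x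
    using MQ by (simp add: matrix_vector_mul_assoc)
  have Mc: "M *v c = \<gamma> *\<^sub>R b"
    by (simp add: c_def matrix_vector_mult_scaleR MQ_apply)
  have real_eq: "1/2 * (((Q - mat 1) *v u) \<bullet> u) + c \<bullet> u + \<gamma> * ((norm (y - u))\<^sup>2 / (2 * \<gamma>))
      = - (c \<bullet> (M *v c)) / 2 - \<gamma> * \<alpha> + \<gamma> * (1/2 * ((A *v y) \<bullet> y) + b \<bullet> y + \<alpha>)
        + (Q *v u + c - y) \<bullet> (M *v (Q *v u + c - y)) / 2" for y
  proof -
    have "(Q *v u - u) \<bullet> u / 2 + c \<bullet> u + (norm (y - u))\<^sup>2 / 2
        = (norm y)\<^sup>2 / 2 - y \<bullet> (M *v y) / 2 + \<gamma> * (b \<bullet> y) - c \<bullet> (M *v c) / 2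
          + (Q *v u + c - y) \<bullet> (M *v (Q *v u + c - y)) / 2"
      using self_adjoint_complete_square[OF matrix_vector_mul_linear M_adj, of "Q *v u" c y]
      by (simp add: MQ_apply Mc)
    moreover have "(norm y)\<^sup>2 / 2 - y \<bullet> (M *v y) / 2 = \<gamma> * ((A *v y) \<bullet> y) / 2"
      by (simp add: M_apply inner_simps power2_norm_eq_inner inner_commute field_simps)
    ultimately show ?thesis
      using \<open>0 < \<gamma>\<close> by (simp add: matrix_vector_mult_diff_rdistrib distrib_left; linarith)
  qed
  show ?thesis
    unfolding moreau_env_def ereal_affine_INF[OF \<open>0 < \<gamma>\<close>]
  proof (rule INF_cong)
    fix y
    show "ereal (1/2 * (((Q - mat 1) *v u) \<bullet> u) + c \<bullet> u)
          + ereal \<gamma> * (g y + ereal ((norm (y - u))\<^sup>2 / (2 * \<gamma>)))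
        = ereal (- (c \<bullet> (M *v c)) / 2 - \<gamma> * \<alpha>)
          + ereal \<gamma> * (ereal (1/2 * ((A *v y) \<bullet> y) + b \<bullet> y + \<alpha>) + g y)
          + ereal ((Q *v u + c - y) \<bullet> (M *v (Q *v u + c - y)) / 2)"
      using real_eq[of y] \<open>0 < \<gamma>\<close> \<open>g y \<noteq> -\<infinity>\<close>
      by (cases "g y") (simp_all add: algebra_simps)
  qed simp
qed

lemma minimizer_of_partial_INF_imp_minimizer:
  fixes F :: "'a::metric_space \<Rightarrow> ereal" and \<Psi> :: "'b \<Rightarrow> ereal"
    and T :: "'b \<Rightarrow> 'a" and R :: "'b \<Rightarrow> 'a \<Rightarrow> real"
  assumes \<Psi>_eq: "\<And>u. \<Psi> u = (INF y. F y + ereal (R u y))"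
    and R_zero: "\<And>u. R u (T u) = 0"
    and R_coercive: "\<And>u y. \<mu> * (dist (T u) y)\<^sup>2 \<le> R u y" and "0 < \<mu>"
    and "surj T" and "lsc_fun F" and "\<Psi> ubar \<noteq> -\<infinity>"
    and min: "\<And>u. \<Psi> ubar \<le> \<Psi> u"
  shows "F (T ubar) \<le> F x"
proof (rule ccontr)
  have R_nonneg: "0 \<le> R u y" for u y
    using R_coercive[of u y] \<open>0 < \<mu>\<close> by (smt (verit) mult_nonneg_nonneg zero_le_power2)
  have below: "\<Psi> ubar \<le> F y" for y
  proof -
    obtain u where "y = T u" using \<open>surj T\<close> by (metis surjD)
    have "\<Psi> u \<le> F (T u)"
      unfolding \<Psi>_eq by (rule INF_lower2[of "T u"]) (simp_all add: R_zero)
    then show ?thesis using min[of u] \<open>y = T u\<close> by simp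
  qed
  assume "\<not> F (T ubar) \<le> F x"
  then obtain t where "F x < ereal t" and "ereal t < F (T ubar)"
    by (meson ereal_dense2 not_le)
  then have "\<Psi> ubar < ereal t" using below[of x] by (metis le_less_trans)
  then obtain m where m: "\<Psi> ubar = ereal m" and "m < t"
    using \<open>\<Psi> ubar \<noteq> -\<infinity>\<close> by (cases "\<Psi> ubar") auto
  obtain \<delta> where "0 < \<delta>" and near: "\<And>y. dist y (T ubar) < \<delta> \<Longrightarrow> ereal t < F y"
    using lsc_fun_less_on_ball[OF \<open>lsc_fun F\<close> \<open>ereal t < F (T ubar)\<close>] by blast
  \<comment> \<open>near \<open>T ubar\<close> the value of F exceeds t; far from it R exceeds \<open>\<mu> \<delta>\<^sup>2\<close>\<close>
  have "min (ereal t) (ereal (m + \<mu> * \<delta>\<^sup>2)) \<le> F y + ereal (R ubar y)" for y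
  proof (cases "dist y (T ubar) < \<delta>")
    case True
    then have "ereal t \<le> F y" using near by (simp add: less_imp_le)
    then have "ereal t \<le> F y + ereal (R ubar y)"
      using R_nonneg by (simp add: add_increasing2)
    then show ?thesis by (simp add: min.coboundedI1)
  next
    case False
    then have "\<mu> * \<delta>\<^sup>2 \<le> R ubar y"
      using R_coercive[of ubar y] \<open>0 < \<mu>\<close> \<open>0 < \<delta>\<close>
      by (smt (verit) dist_commute mult_left_mono power_mono)
    then have "ereal m + ereal (\<mu> * \<delta>\<^sup>2) \<le> F y + ereal (R ubar y)"
      using below[of y] m by (intro add_mono) auto
    then show ?thesis by (simp add: min.coboundedI2)
  qed
  then have "min (ereal t) (ereal (m + \<mu> * \<delta>\<^sup>2)) \<le> \<Psi> ubar"
    unfolding \<Psi>_eq by (rule INF_greatest)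
  moreover have "0 < \<mu> * \<delta>\<^sup>2" using \<open>0 < \<mu>\<close> \<open>0 < \<delta>\<close> by simp
  ultimately show False using m \<open>m < t\<close> by (simp add: min_def split: if_splits)
qed

lemma minimizer_iff_minimizer_partial_INF:
  fixes F :: "'a::metric_space \<Rightarrow> ereal" and \<Psi> :: "'b \<Rightarrow> ereal"
    and T :: "'b \<Rightarrow> 'a" and R :: "'b \<Rightarrow> 'a \<Rightarrow> real"
  assumes \<Psi>_eq: "\<And>u. \<Psi> u = (INF y. F y + ereal (R u y))"
    and R_zero: "\<And>u. R u (T u) = 0"
    and R_coercive: "\<And>u y. \<mu> * (dist (T u) y)\<^sup>2 \<le> R u y" and "0 < \<mu>"
    and "surj T" and "lsc_fun F" and \<Psi>_neq_MInf: "\<And>u. \<Psi> u \<noteq> -\<infinity>"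
  shows "(\<forall>x. F xbar \<le> F x) \<longleftrightarrow> (\<exists>ubar. (\<forall>u. \<Psi> ubar \<le> \<Psi> u) \<and> xbar = T ubar)"
proof
  assume min: "\<forall>x. F xbar \<le> F x"
  obtain ubar where ubar: "xbar = T ubar" using \<open>surj T\<close> by (metis surjD)
  have "\<Psi> ubar \<le> \<Psi> u" for u
  proof -
    have "\<Psi> ubar \<le> F xbar"
      unfolding \<Psi>_eq ubar by (rule INF_lower2[of "T ubar"]) (simp_all add: R_zero)
    also have "\<dots> \<le> \<Psi> u"
    proof -
      have "0 \<le> R u y" for y
        using R_coercive[of u y] \<open>0 < \<mu>\<close> by (smt (verit) mult_nonneg_nonneg zero_le_power2)
      then show ?thesis
        unfolding \<Psi>_eq using min by (intro INF_greatest add_increasing2) auto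
    qed
    finally show ?thesis .
  qed
  with ubar show "\<exists>ubar. (\<forall>u. \<Psi> ubar \<le> \<Psi> u) \<and> xbar = T ubar" by blast
next
  assume "\<exists>ubar. (\<forall>u. \<Psi> ubar \<le> \<Psi> u) \<and> xbar = T ubar"
  then show "\<forall>x. F xbar \<le> F x"
    using minimizer_of_partial_INF_imp_minimizer[OF assms(1-6) \<Psi>_neq_MInf] by blast
qed

theorem lemma5p8:
  fixes A :: "real^'n^'n" and b :: "real^'n" and \<alpha> :: real
    and g :: "real^'n \<Rightarrow> ereal" and \<gamma> :: real
    and Q P :: "real^'n^'n" and c :: "real^'n"
    and \<psi> \<phi> :: "real^'n \<Rightarrow> ereal" and xbar :: "real^'n"
  assumes symA: "transpose A = A"
    and psdA: "pos_semidef A"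
    and g_proper: "proper_fun g"
    and g_lsc: "lsc_fun g"
    and g_convex: "ereal_convex_fun g"
    and gamma_pos: "\<gamma> > 0"
    and pd: "pos_def (mat 1 - \<gamma> *\<^sub>R A)"
    and Q_def: "Q = matrix_inv (mat 1 - \<gamma> *\<^sub>R A)"
    and c_def: "c = \<gamma> *\<^sub>R (Q *v b)"
    and P_def: "P = Q - mat 1"
    and psi_def: "\<psi> = (\<lambda>u. ereal (1/2 * ((P *v u) \<bullet> u) + c \<bullet> u) + ereal \<gamma> * moreau_env \<gamma> g u)"
    and phi_def: "\<phi> = (\<lambda>x. ereal (1/2 * ((A *v x) \<bullet> x) + b \<bullet> x + \<alpha>) + g x)"
  shows "(\<forall>x. \<phi> xbar \<le> \<phi> x) \<longleftrightarrow>
         (\<exists>ubar. (\<forall>u. \<psi> ubar \<le> \<psi> u) \<and> xbar = Q *v ubar + c)"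
proof -
  define M where "M = mat 1 - \<gamma> *\<^sub>R A"
  define K where "K = - (c \<bullet> (M *v c)) / 2 - \<gamma> * \<alpha>"
  define F where "F y = ereal K + ereal \<gamma> * \<phi> y" for y
  define R where "R u y = (Q *v u + c - y) \<bullet> (M *v (Q *v u + c - y)) / 2" for u y
  have "invertible M" using pd pos_def_invertible unfolding M_def by blast
  then have MQ: "M ** Q = mat 1" and QM: "Q ** M = mat 1"
    unfolding Q_def M_def[symmetric] by (auto intro: matrix_mul_inv_right matrix_mul_inv_left)
  have g_neq_MInf: "g y \<noteq> -\<infinity>" for y using g_proper unfolding proper_fun_def by blast
  have \<psi>_eq: "\<psi> u = (INF y. F y + ereal (R u y))" for u
    using quadratic_plus_moreau_env_eq_INF[where g = g and \<alpha> = \<alpha>,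
        OF symA gamma_pos g_neq_MInf M_def MQ c_def]
    by (simp add: psi_def P_def F_def R_def phi_def K_def)
  obtain \<mu> where "0 < \<mu>" and \<mu>: "\<And>d. \<mu> * (norm d)\<^sup>2 \<le> d \<bullet> (M *v d)"
    using pos_def_quadratic_form_ge pd unfolding M_def by blast
  have "\<mu> / 2 * (dist (Q *v u + c) y)\<^sup>2 \<le> R u y" for u y
    using \<mu>[of "Q *v u + c - y"] by (simp add: R_def dist_norm)
  moreover have "R u (Q *v u + c) = 0" for u by (simp add: R_def)
  moreover have "surj (\<lambda>u. Q *v u + c)"
  proof (rule surjI)
    show "Q *v (M *v (x - c)) + c = x" for x using QM by (simp add: matrix_vector_mul_assoc)
  qed
  moreover have "lsc_fun F"
    unfolding F_def phi_def
    by (intro lsc_fun_add_continuous lsc_fun_cmult g_lsc continuous_intros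
        linear_continuous_on matrix_vector_mul_bounded_linear) (use gamma_pos in auto)
  moreover have "\<psi> u \<noteq> -\<infinity>" for u
    using moreau_env_neq_MInf[OF g_proper g_lsc g_convex gamma_pos, of u] gamma_pos
    by (cases "moreau_env \<gamma> g u") (auto simp: psi_def)
  ultimately have "(\<forall>x. F xbar \<le> F x) \<longleftrightarrow> (\<exists>ubar. (\<forall>u. \<psi> ubar \<le> \<psi> u) \<and> xbar = Q *v ubar + c)"
    using \<open>0 < \<mu>\<close>
    by (intro minimizer_iff_minimizer_partial_INF[where \<mu> = "\<mu> / 2", OF \<psi>_eq]) auto
  moreover have "F xbar \<le> F x \<longleftrightarrow> \<phi> xbar \<le> \<phi> x" for x
    using gamma_pos by (simp add: F_def ereal_add_le_add_iff ereal_mult_le_mult_iff)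
  ultimately show ?thesis by simp
qed

end
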